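(* Let $L \geq 2$, $m = L+1$, $\gamma = (L+1)^3$, and for $i \in \{0,\ldots,L\}$, $k\in[m]$ let $\pi_i(A_k) = w_i(k)/\sum_{h=1}^m w_i(h)$ with $w_i(k) = \gamma^{2(i+1)k - k^2+1} + \sum_{r=0}^L\gamma^{(2r+1)(i+1)-r^2-r}$. Let $\overline{\pi}(\xi) = \prod_{i=0}^L \pi_i(A_{\xi_i})$ for $\xi\in[m]^{L+1}$, let $\lambda = (1, 2, \ldots, m)$, let $\mathcal{X}_\lambda$ be the set of states reachable from $\lambda$ by finitely many swaps of adjacent levels, and $\overline{\pi}_\lambda = \overline{\pi}/\overline{\pi}(\mathcal{X}_\lambda)$ on $\mathcal{X}_\lambda$. Let $S \subseteq \mathcal{X}_\lambda$ be the set of states $\xi$ for which there is a sequence $\lambda = \tau^0,\ldots,\tau^N = \xi$, each obtained from the previous by swapping the entries of two adjacent levels, such that every $\tau^s$ differs from $\lambda$ in at most $\lfloor\log_2 L\rfloor - 1$ coordinates. Then $\overline{\pi}_\lambda(\mathcal{X}_\lambda\setminus S) > \frac{1}{4e(L+1)^6}$.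
   Context: A swap of adjacent levels maps $\xi$ to $(j-1,j)\xi$, the vector with entries at positions $j-1$ and $j$ exchanged, $j\in\{1,\ldots,L\}$. Two states differ in coordinate $\ell$ if their $\ell$-th entries are unequal. *)

theory Defs
  imports Complex_Main
begin

text \<open>States are lists of length L+1; entry at position i (level i, 0 \<le> i \<le> L)
  lies in [m] = {1..m}, m = L+1.\<close>

definition gam :: "nat \<Rightarrow> real" where
  "gam L = (real L + 1) ^ 3"

text \<open>w_i(k); exponents are integers and may be negative.\<close>
definition wt :: "nat \<Rightarrow> nat \<Rightarrow> nat \<Rightarrow> real" where
  "wt L i k = gam L powi (2 * (int i + 1) * int k - (int k)^2 + 1)
     + (\<Sum>r\<in>{0..L}. gam L powi ((2 * int r + 1) * (int i + 1) - (int r)^2 - int r))"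

definition piA :: "nat \<Rightarrow> nat \<Rightarrow> nat \<Rightarrow> real" where
  "piA L i k = wt L i k / (\<Sum>h\<in>{1..L+1}. wt L i h)"

definition pibar :: "nat \<Rightarrow> nat list \<Rightarrow> real" where
  "pibar L \<xi> = (\<Prod>i\<in>{0..L}. piA L i (\<xi> ! i))"

definition lam :: "nat \<Rightarrow> nat list" where
  "lam L = map Suc [0..<L+1]"

definition swp :: "nat \<Rightarrow> nat list \<Rightarrow> nat list" where
  "swp j \<xi> = \<xi>[j - 1 := \<xi> ! j, j := \<xi> ! (j - 1)]"

definition step :: "nat \<Rightarrow> nat list \<Rightarrow> nat list \<Rightarrow> bool" where
  "step L \<xi> \<eta> \<longleftrightarrow> (\<exists>j\<in>{1..L}. \<eta> = swp j \<xi>)"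

definition ndiff :: "nat \<Rightarrow> nat list \<Rightarrow> nat list \<Rightarrow> nat" where
  "ndiff L \<xi> \<eta> = card {l. l \<le> L \<and> \<xi> ! l \<noteq> \<eta> ! l}"

definition Xlam :: "nat \<Rightarrow> nat list set" where
  "Xlam L = {\<xi>. \<exists>N \<tau>. \<tau> 0 = lam L \<and> \<tau> N = \<xi> \<and> (\<forall>s<N. step L (\<tau> s) (\<tau> (Suc s)))}"

definition Sset :: "nat \<Rightarrow> nat list set" where
  "Sset L = {\<xi>. \<exists>N \<tau>. \<tau> 0 = lam L \<and> \<tau> N = \<xi> \<and> (\<forall>s<N. step L (\<tau> s) (\<tau> (Suc s)))
      \<and> (\<forall>s\<le>N. int (ndiff L (\<tau> s) (lam L)) \<le> \<lfloor>log 2 (real L)\<rfloor> - 1)}"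

definition pibar_lam :: "nat \<Rightarrow> nat list set \<Rightarrow> real" where
  "pibar_lam L A = (\<Sum>\<xi>\<in>A. pibar L \<xi>) / (\<Sum>\<xi>\<in>Xlam L. pibar L \<xi>)"

end

(*
  The witness is lambda with the entries of levels 0 and L exchanged. It is reachable (bubble 1 to
  the last level, then L+1 to the first), and it is heavy: the levels 1, ..., L-1 carry their
  diagonal entries, of probability at least L/(L+1) each, the two end levels have probability at
  least 1/(2 gamma), and pibar(X_lambda) <= 1, so its share is at least
  (2 gamma)^-2 (L/(L+1))^(L-1) > 1/(4 e (L+1)^6).

  It is not in S because of a window-crossing bound: if a value moves by adjacent swaps from the
  left of a window of 2^k consecutive levels to its right, then at some time before its arrival
  more than k levels of the window differ from their initial entries. The value 1 crosses the
  window of levels 1, ..., L-1, which is at least 2^(floor(log2 L) - 1) wide. Split the window into halves and let R be the last time before the crossing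
  at which the right half is intact. If the left half stays disturbed afterwards, the right half
  is left with budget k and the value crosses it. Otherwise let r be the first later time at which
  the left half is intact. Between R and r no value can enter the positions left of the right
  half, as it would cross the right half leftwards, or the left half rightwards backwards in time,
  within budget k. So at time r the value is left of the window and then crosses the left half
  within budget k.
*)
theory Submission
  imports Defs "HOL-Library.Multiset"
begin

section \<open>Adjacent swaps\<close>

lemma nth_swp:
  assumes "j \<in> {1..L}" "length xs = Suc L" "p < Suc L"
  shows "swp j xs ! p = (if p = j - 1 then xs ! j else if p = j then xs ! (j - 1) else xs ! p)"
  using assms by (auto simp: swp_def nth_list_update)

lemma length_swp [simp]: "length (swp j xs) = length xs"
  by (simp add: swp_def)

lemma step_mset: "step L xs ys \<Longrightarrow> length xs = Suc L \<Longrightarrow> mset ys = mset xs"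
  by (auto simp: step_def swp_def intro!: mset_swap)

lemma step_rev:
  assumes "step L xs ys" "length xs = Suc L"
  shows "step L (rev xs) (rev ys)"
proof -
  obtain j where j: "j \<in> {1..L}" "ys = swp j xs" using assms(1) by (auto simp: step_def)
  have j': "Suc L - j \<in> {1..L}" using j by auto
  have "rev ys = swp (Suc L - j) (rev xs)"
  proof (rule nth_equalityI)
    fix i assume "i < length (rev ys)"
    then have i: "i < Suc L" using j assms(2) by simp
    show "rev ys ! i = swp (Suc L - j) (rev xs) ! i"
      using nth_swp[OF j' _ i, of "rev xs"] nth_swp[OF j(1) assms(2), of "L - i"] i j assms(2)
      by (auto simp: rev_nth)
  qed (use j in simp)
  then show ?thesis using j' by (auto simp: step_def)
qed

lemma step_take_Suc:
  assumes "step L xs ys" "length xs = Suc L" "v \<in> set (take c xs)"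
  shows "v \<in> set (take (Suc c) ys)"
proof -
  obtain j where j: "j \<in> {1..L}" "ys = swp j xs" using assms(1) by (auto simp: step_def)
  obtain p where p: "p < c" "p < Suc L" "xs ! p = v" using assms(2,3) by (auto simp: in_set_conv_nth)
  define q where "q = (if p = j - 1 then j else if p = j then j - 1 else p)"
  have "q < length (take (Suc c) ys)" "take (Suc c) ys ! q = v"
    using j p assms(2) by (auto simp: q_def nth_swp)
  then show ?thesis by (metis nth_mem)
qed

lemma step_sym:
  assumes "step L xs ys" "length xs = Suc L"
  shows "step L ys xs"
proof -
  obtain j where j: "j \<in> {1..L}" "ys = swp j xs" using assms(1) by (auto simp: step_def)
  have "xs = swp j ys"
    using j assms(2) by (intro nth_equalityI) (auto simp: nth_swp)
  then show ?thesis using j(1) by (auto simp: step_def)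
qed

definition swap_walk :: "nat \<Rightarrow> (nat \<Rightarrow> nat list) \<Rightarrow> nat \<Rightarrow> bool" where
  "swap_walk L \<rho> E \<longleftrightarrow> length (\<rho> 0) = Suc L \<and> (\<forall>s<E. step L (\<rho> s) (\<rho> (Suc s)))"

lemma swap_walk_mset:
  assumes "swap_walk L \<rho> E" "t \<le> E"
  shows "mset (\<rho> t) = mset (\<rho> 0)"
  using assms(2)
proof (induction t)
  case (Suc t)
  then have "mset (\<rho> t) = mset (\<rho> 0)" by simp
  moreover have "step L (\<rho> t) (\<rho> (Suc t))" using assms(1) Suc.prems by (simp add: swap_walk_def)
  moreover have "length (\<rho> t) = Suc L"
    using \<open>mset (\<rho> t) = mset (\<rho> 0)\<close> assms(1) by (metis mset_eq_length swap_walk_def)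
  ultimately show ?case by (simp add: step_mset)
qed simp

lemma swap_walk_state:
  assumes "swap_walk L \<rho> E" "t \<le> E"
  shows "length (\<rho> t) = Suc L" "set (\<rho> t) = set (\<rho> 0)" "distinct (\<rho> t) \<longleftrightarrow> distinct (\<rho> 0)"
  using swap_walk_mset[OF assms] assms(1)
  by (auto simp: swap_walk_def dest: mset_eq_length mset_eq_setD mset_eq_imp_distinct_iff)

lemma swap_walk_shift:
  assumes "swap_walk L \<rho> E" "s \<le> e" "e \<le> E"
  shows "swap_walk L (\<lambda>t. \<rho> (s + t)) (e - s)"
  using assms swap_walk_state(1)[OF assms(1), of s] by (auto simp: swap_walk_def)

lemma swap_walk_backwards:
  assumes "swap_walk L \<rho> E" "s \<le> e" "e \<le> E"
  shows "swap_walk L (\<lambda>t. \<rho> (e - t)) (e - s)"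
  unfolding swap_walk_def
proof (intro conjI allI impI)
  show "length (\<rho> (e - 0)) = Suc L" using swap_walk_state(1)[OF assms(1)] assms(3) by simp
  fix t assume t: "t < e - s"
  then have "step L (\<rho> (e - Suc t)) (\<rho> (Suc (e - Suc t)))" using assms by (simp add: swap_walk_def)
  moreover have "Suc (e - Suc t) = e - t" using t by simp
  ultimately show "step L (\<rho> (e - t)) (\<rho> (e - Suc t))"
    using step_sym swap_walk_state(1)[OF assms(1), of "e - Suc t"] assms(3) by simp
qed

lemma swap_walk_rev:
  assumes "swap_walk L \<rho> E"
  shows "swap_walk L (\<lambda>t. rev (\<rho> t)) E"
  using assms step_rev swap_walk_state(1)[OF assms] by (simp add: swap_walk_def)

section \<open>Window crossings\<close>

definition mismatches :: "nat list \<Rightarrow> nat list \<Rightarrow> nat \<Rightarrow> nat \<Rightarrow> nat set" where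
  "mismatches \<zeta> xs a b = {p \<in> {a..<b}. xs ! p \<noteq> \<zeta> ! p}"

lemma finite_mismatches [simp]: "finite (mismatches \<zeta> xs a b)"
  by (simp add: mismatches_def)

lemma mismatches_self [simp]: "mismatches xs xs a b = {}"
  by (simp add: mismatches_def)

lemma mismatches_cong_intact:
  "mismatches \<zeta> \<eta> a b = {} \<Longrightarrow> mismatches \<eta> xs a b = mismatches \<zeta> xs a b"
  by (auto simp: mismatches_def)

lemma card_mismatches_split:
  assumes "a \<le> m" "m \<le> b"
  shows "card (mismatches \<zeta> xs a b) = card (mismatches \<zeta> xs a m) + card (mismatches \<zeta> xs m b)"
proof -
  have "mismatches \<zeta> xs a b = mismatches \<zeta> xs a m \<union> mismatches \<zeta> xs m b"
    using assms by (auto simp: mismatches_def)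
  moreover have "mismatches \<zeta> xs a m \<inter> mismatches \<zeta> xs m b = {}"
    by (auto simp: mismatches_def)
  ultimately show ?thesis by (simp add: card_Un_disjoint)
qed

lemma card_mismatches_rev:
  assumes "length \<zeta> = Suc L" "length xs = Suc L" "b \<le> Suc L"
  shows "card (mismatches (rev \<zeta>) (rev xs) (Suc L - b) (Suc L - a)) = card (mismatches \<zeta> xs a b)"
proof -
  have "mismatches (rev \<zeta>) (rev xs) (Suc L - b) (Suc L - a) = (\<lambda>p. L - p) ` mismatches \<zeta> xs a b"
  proof (intro set_eqI iffI)
    fix p assume "p \<in> mismatches (rev \<zeta>) (rev xs) (Suc L - b) (Suc L - a)"
    then have "L - p \<in> mismatches \<zeta> xs a b" "p = L - (L - p)"
      using assms by (auto simp: mismatches_def rev_nth)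
    then show "p \<in> (\<lambda>p. L - p) ` mismatches \<zeta> xs a b" by blast
  qed (use assms in \<open>auto simp: mismatches_def rev_nth\<close>)
  moreover have "inj_on (\<lambda>p. L - p) (mismatches \<zeta> xs a b)"
    using assms by (intro inj_onI) (auto simp: mismatches_def)
  ultimately show ?thesis by (simp add: card_image)
qed

lemma outside_intact_window:
  assumes "mismatches \<zeta> xs a b = {}" "v \<in> set xs" "v \<notin> (!) \<zeta> ` {a..<b}"
  shows "v \<in> set (take a xs) \<or> v \<in> set (drop b xs)"
proof -
  obtain p where p: "p < length xs" "xs ! p = v" using assms(2) by (auto simp: in_set_conv_nth)
  have "p < a \<or> b \<le> p"
    using assms(1,3) p by (auto simp: mismatches_def)
  then show ?thesis
  proof
    assume "p < a"
    then have "take a xs ! p = v" "p < length (take a xs)" using p by auto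
    then show ?thesis by (metis nth_mem)
  next
    assume "b \<le> p"
    then have "drop b xs ! (p - b) = v" "p - b < length (drop b xs)" using p by auto
    then show ?thesis by (metis nth_mem)
  qed
qed

lemma nth_notin_window_if_in_take:
  assumes "distinct xs" "b \<le> length xs" "v \<in> set (take a xs)"
  shows "v \<notin> (!) xs ` {a..<b}"
proof
  assume "v \<in> (!) xs ` {a..<b}"
  then obtain q where q: "a \<le> q" "q < b" "xs ! q = v" by auto
  obtain p where p: "p < a" "p < length xs" "xs ! p = v"
    using assms(3) by (auto simp: in_set_conv_nth)
  show False using nth_eq_iff_index_eq[OF assms(1), of p q] p q assms(2) by simp
qed

lemma nth_image_disjoint_windows:
  assumes "distinct xs" "b \<le> length xs" "w \<in> (!) xs ` {a..<m}"
  shows "w \<notin> (!) xs ` {m..<b}"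
proof
  assume "w \<in> (!) xs ` {m..<b}"
  then obtain q where q: "m \<le> q" "q < b" "xs ! q = w" by auto
  obtain p where p: "p < m" "xs ! p = w" using assms(3) by auto
  show False using nth_eq_iff_index_eq[OF assms(1), of p q] p q assms(2) by simp
qed

lemma set_take_eq_if_subset:
  assumes "distinct xs" "distinct ys" "m \<le> length xs" "m \<le> length ys"
    "set (take m ys) \<subseteq> set (take m xs)"
  shows "set (take m ys) = set (take m xs)"
  using assms by (intro card_subset_eq) (simp_all add: distinct_card)

definition crossing_forces_mismatches :: "nat \<Rightarrow> nat \<Rightarrow> bool" where
  "crossing_forces_mismatches L k \<longleftrightarrow>
    (\<forall>\<rho> E a b v. swap_walk L \<rho> E \<longrightarrow> distinct (\<rho> 0) \<longrightarrow> a + 2 ^ k \<le> b \<longrightarrow> b \<le> Suc L \<longrightarrow>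
      v \<in> set (take a (\<rho> 0)) \<longrightarrow> v \<in> set (drop b (\<rho> E)) \<longrightarrow>
      (\<exists>t<E. k < card (mismatches (\<rho> 0) (\<rho> t) a b)))"

lemma crossing_forces_mismatchesE:
  assumes "crossing_forces_mismatches L k" "swap_walk L \<rho> E" "distinct (\<rho> 0)"
    "a + 2 ^ k \<le> b" "b \<le> Suc L" "v \<in> set (take a (\<rho> 0))" "v \<in> set (drop b (\<rho> E))"
  obtains t where "t < E" "k < card (mismatches (\<rho> 0) (\<rho> t) a b)"
  using assms unfolding crossing_forces_mismatches_def by blast

lemma crossing_forces_mismatches_0: "crossing_forces_mismatches L 0"
  unfolding crossing_forces_mismatches_def
proof (intro allI impI)
  fix \<rho> E a b v
  assume walk: "swap_walk L \<rho> E" and dist: "distinct (\<rho> 0)" and width: "a + 2 ^ 0 \<le> b"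
    and b: "b \<le> Suc L" and start: "v \<in> set (take a (\<rho> 0))" and final: "v \<in> set (drop b (\<rho> E))"
  have "v \<notin> set (take (Suc a) (\<rho> E))"
    using set_take_disj_set_drop_if_distinct[of "\<rho> E" "Suc a" b] swap_walk_state[OF walk] dist width final
    by auto
  then have "v \<notin> set (take a (\<rho> E))" using set_take_subset_set_take[of a "Suc a" "\<rho> E"] by auto
  then obtain u where u: "u \<le> E" "\<And>i. i < u \<Longrightarrow> v \<in> set (take a (\<rho> i))" "v \<notin> set (take a (\<rho> u))"
    using ex_least_nat_le[of "\<lambda>t. v \<notin> set (take a (\<rho> t))" E] by blast
  then obtain u' where u': "u = Suc u'" using start by (cases u) auto
  have "v \<in> set (take (Suc a) (\<rho> u))"
    using step_take_Suc[of L "\<rho> u'" "\<rho> u" v a] walk u u' swap_walk_state(1)[OF walk, of u']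
    by (auto simp: swap_walk_def)
  then have "u \<noteq> E" using \<open>v \<notin> set (take (Suc a) (\<rho> E))\<close> by auto
  have "a < length (\<rho> u)" using width b swap_walk_state(1)[OF walk u(1)] by simp
  then have "\<rho> u ! a = v" using u(3) \<open>v \<in> set (take (Suc a) (\<rho> u))\<close> by (simp add: take_Suc_conv_app_nth)
  moreover have "\<rho> 0 ! a \<noteq> v"
    using nth_notin_window_if_in_take[OF dist _ start, of "Suc a"] \<open>a < length (\<rho> u)\<close>
      swap_walk_state(1)[OF walk] u(1) by auto
  ultimately have "a \<in> mismatches (\<rho> 0) (\<rho> u) a b" using width by (simp add: mismatches_def)
  then have "0 < card (mismatches (\<rho> 0) (\<rho> u) a b)" by (auto simp: card_gt_0_iff)
  then show "\<exists>t<E. 0 < card (mismatches (\<rho> 0) (\<rho> t) a b)"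
    using u(1) \<open>u \<noteq> E\<close> by (intro exI[of _ u]) simp
qed

lemma no_rightward_crossing_within_budget:
  assumes "crossing_forces_mismatches L k" "swap_walk L \<rho> E" "distinct (\<rho> 0)"
    "s \<le> e" "e \<le> E" "a + 2 ^ k \<le> b" "b \<le> Suc L"
    "mismatches \<zeta> (\<rho> s) a b = {}"
    "\<And>t. s < t \<Longrightarrow> t < e \<Longrightarrow> card (mismatches \<zeta> (\<rho> t) a b) \<le> k"
    "v \<in> set (take a (\<rho> s))"
  shows "v \<notin> set (drop b (\<rho> e))"
proof
  assume "v \<in> set (drop b (\<rho> e))"
  moreover have "distinct (\<rho> s)" using swap_walk_state(3)[OF assms(2)] assms(3-5) by simp
  ultimately obtain t where t: "t < e - s" "k < card (mismatches (\<rho> s) (\<rho> (s + t)) a b)"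
    using crossing_forces_mismatchesE[OF assms(1) swap_walk_shift[OF assms(2,4,5)], of a b v]
      assms(4,6,7,10) by auto
  then have "k < card (mismatches \<zeta> (\<rho> (s + t)) a b)"
    using mismatches_cong_intact[OF assms(8)] by simp
  moreover have "0 < t" using t(2) by (cases "t = 0") simp_all
  moreover have "s + t < e" using t(1) by linarith
  ultimately show False using assms(9)[of "s + t"] by simp
qed

lemma no_leftward_crossing_within_budget:
  assumes "crossing_forces_mismatches L k" "swap_walk L \<rho> E" "distinct (\<rho> 0)"
    "s \<le> e" "e \<le> E" "a + 2 ^ k \<le> b" "b \<le> Suc L" "length \<zeta> = Suc L"
    "mismatches \<zeta> (\<rho> s) a b = {}"
    "\<And>t. s < t \<Longrightarrow> t < e \<Longrightarrow> card (mismatches \<zeta> (\<rho> t) a b) \<le> k"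
    "v \<in> set (drop b (\<rho> s))"
  shows "v \<notin> set (take a (\<rho> e))"
proof -
  have len: "length (\<rho> t) = Suc L" if "t \<le> E" for t using swap_walk_state(1)[OF assms(2) that] .
  have mirror: "card (mismatches (rev \<zeta>) (rev (\<rho> t)) (Suc L - b) (Suc L - a))
      = card (mismatches \<zeta> (\<rho> t) a b)" if "t \<le> E" for t
    using card_mismatches_rev[OF assms(8) len[OF that] assms(7)] .
  have "v \<notin> set (drop (Suc L - a) (rev (\<rho> e)))"
  proof (rule no_rightward_crossing_within_budget[OF assms(1) swap_walk_rev[OF assms(2)] _ assms(4,5)])
    show "distinct (rev (\<rho> 0))" using assms(3) by simp
    show "Suc L - b + 2 ^ k \<le> Suc L - a" using assms(6,7) by simp
    show "mismatches (rev \<zeta>) (rev (\<rho> s)) (Suc L - b) (Suc L - a) = {}"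
      using mirror[of s] assms(4,5,9) by simp
    show "card (mismatches (rev \<zeta>) (rev (\<rho> t)) (Suc L - b) (Suc L - a)) \<le> k" if "s < t" "t < e" for t
      using mirror[of t] assms(5,10) that by simp
    show "v \<in> set (take (Suc L - b) (rev (\<rho> s)))"
      using assms(4,5,7,11) len[of s] by (simp add: take_rev)
  qed simp
  then show ?thesis using assms(5,6,7) len[of e] by (simp add: drop_rev)
qed

lemma in_set_drop_iff_notin_take:
  assumes "distinct xs" "v \<in> set xs"
  shows "v \<in> set (drop m xs) \<longleftrightarrow> v \<notin> set (take m xs)"
proof -
  have "set xs = set (take m xs) \<union> set (drop m xs)" by (metis append_take_drop_id set_append)
  then show ?thesis using set_take_disj_set_drop_if_distinct[OF assms(1), of m m] assms(2) by blast
qed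

lemma no_entry_across_right_half:
  assumes IH: "crossing_forces_mismatches L k" and walk: "swap_walk L \<rho> E" and dist: "distinct (\<rho> 0)"
    and widths: "m + 2 ^ k \<le> b" "b \<le> Suc L" and times: "R \<le> r" "r \<le> E"
    and right_intact: "mismatches (\<rho> 0) (\<rho> R) m b = {}"
    and budget: "\<And>t. R < t \<Longrightarrow> t < r \<Longrightarrow> card (mismatches (\<rho> 0) (\<rho> t) m b) \<le> k"
    and left_value: "w \<in> (!) (\<rho> 0) ` {a..<m}" and w_R: "w \<notin> set (take m (\<rho> R))"
  shows "w \<notin> set (take m (\<rho> r))"
proof -
  have len: "length (\<rho> 0) = Suc L" using swap_walk_state(1)[OF walk] by simp
  have "w \<in> set (\<rho> 0)" using left_value len widths by auto
  then have "w \<in> set (\<rho> R)" using swap_walk_state(2)[OF walk, of R] times by simp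
  moreover have "w \<notin> (!) (\<rho> 0) ` {m..<b}"
    using nth_image_disjoint_windows[OF dist _ left_value] len widths by simp
  ultimately have "w \<in> set (drop b (\<rho> R))"
    using outside_intact_window[OF right_intact] w_R by blast
  then show ?thesis
    using no_leftward_crossing_within_budget[OF IH walk dist times widths len right_intact budget]
    by blast
qed

lemma no_entry_across_left_half:
  assumes IH: "crossing_forces_mismatches L k" and walk: "swap_walk L \<rho> E" and dist: "distinct (\<rho> 0)"
    and widths: "a + 2 ^ k \<le> m" "m \<le> Suc L" and times: "R \<le> r" "r \<le> E"
    and left_intact: "mismatches (\<rho> 0) (\<rho> r) a m = {}"
    and budget: "\<And>t. R < t \<Longrightarrow> t < r \<Longrightarrow> card (mismatches (\<rho> 0) (\<rho> t) a m) \<le> k"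
    and not_left_value: "w \<notin> (!) (\<rho> 0) ` {a..<m}" and w_R: "w \<notin> set (take m (\<rho> R))"
  shows "w \<notin> set (take m (\<rho> r))"
proof
  assume w_r: "w \<in> set (take m (\<rho> r))"
  have dist_r: "distinct (\<rho> r)" and dist_R: "distinct (\<rho> R)"
    using swap_walk_state(3)[OF walk] dist times by auto
  have "w \<in> set (\<rho> R)"
    using in_set_takeD[OF w_r] swap_walk_state(2)[OF walk, of r] swap_walk_state(2)[OF walk, of R] times
    by simp
  then have w_R': "w \<in> set (drop m (\<rho> R))"
    using in_set_drop_iff_notin_take[OF dist_R] w_R by blast
  have "w \<notin> set (drop m (\<rho> r))"
    using in_set_drop_iff_notin_take[OF dist_r in_set_takeD[OF w_r]] w_r by blast
  then have w_left: "w \<in> set (take a (\<rho> r))"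
    using outside_intact_window[OF left_intact in_set_takeD[OF w_r] not_left_value] by blast
  \<comment> \<open>Running time backwards from \<open>r\<close>, the value \<open>w\<close> crosses the left half from left to right.\<close>
  have "w \<notin> set (drop m ((\<lambda>t. \<rho> (r - t)) (r - R)))"
  proof (rule no_rightward_crossing_within_budget[OF IH swap_walk_backwards[OF walk times] _ le0
        order_refl widths])
    show "distinct ((\<lambda>t. \<rho> (r - t)) 0)" using dist_r by simp
    show "mismatches (\<rho> 0) ((\<lambda>t. \<rho> (r - t)) 0) a m = {}" using left_intact by simp
    show "card (mismatches (\<rho> 0) ((\<lambda>t. \<rho> (r - t)) t) a m) \<le> k" if "0 < t" "t < r - R" for t
      using budget[of "r - t"] that by simp
    show "w \<in> set (take a ((\<lambda>t. \<rho> (r - t)) 0))" using w_left by simp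
  qed
  then show False using w_R' times by simp
qed

lemma set_take_eq_between_intact_halves:
  assumes IH: "crossing_forces_mismatches L k" and walk: "swap_walk L \<rho> E" and dist: "distinct (\<rho> 0)"
    and widths: "a + 2 ^ k \<le> m" "m + 2 ^ k \<le> b" "b \<le> Suc L"
    and times: "R \<le> r" "r \<le> E"
    and right_intact: "mismatches (\<rho> 0) (\<rho> R) m b = {}"
    and left_intact: "mismatches (\<rho> 0) (\<rho> r) a m = {}"
    and budget: "\<And>t. R < t \<Longrightarrow> t < r \<Longrightarrow>
      card (mismatches (\<rho> 0) (\<rho> t) a m) \<le> k \<and> card (mismatches (\<rho> 0) (\<rho> t) m b) \<le> k"
  shows "set (take m (\<rho> r)) = set (take m (\<rho> R))"
proof (rule set_take_eq_if_subset)
  have budget_left: "card (mismatches (\<rho> 0) (\<rho> t) a m) \<le> k"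
    and budget_right: "card (mismatches (\<rho> 0) (\<rho> t) m b) \<le> k" if "R < t" "t < r" for t
    using budget[OF that] by simp_all
  have "m \<le> Suc L" using widths by simp
  show "set (take m (\<rho> r)) \<subseteq> set (take m (\<rho> R))"
  proof (rule subsetI, rule ccontr)
    fix w assume w_r: "w \<in> set (take m (\<rho> r))" and w_R: "w \<notin> set (take m (\<rho> R))"
    show False
    proof (cases "w \<in> (!) (\<rho> 0) ` {a..<m}")
      case True
      show False using w_r no_entry_across_right_half[OF IH walk dist widths(2,3) times right_intact
          budget_right True w_R] by simp
    next
      case False
      show False using w_r no_entry_across_left_half[OF IH walk dist widths(1) \<open>m \<le> Suc L\<close> times
          left_intact budget_left False w_R] by simp
    qed
  qed
  show "distinct (\<rho> R)" "distinct (\<rho> r)" "m \<le> length (\<rho> R)" "m \<le> length (\<rho> r)"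
    using swap_walk_state[OF walk] dist times widths by auto
qed

lemma card_mismatches_halves_le:
  assumes "a \<le> m" "m \<le> b" "card (mismatches \<zeta> xs a b) \<le> Suc k"
  shows "mismatches \<zeta> xs m b \<noteq> {} \<Longrightarrow> card (mismatches \<zeta> xs a m) \<le> k"
    and "mismatches \<zeta> xs a m \<noteq> {} \<Longrightarrow> card (mismatches \<zeta> xs m b) \<le> k"
proof -
  have split: "card (mismatches \<zeta> xs a m) + card (mismatches \<zeta> xs m b) \<le> Suc k"
    using assms card_mismatches_split[OF assms(1,2), of \<zeta> xs] by simp
  show "card (mismatches \<zeta> xs a m) \<le> k" if "mismatches \<zeta> xs m b \<noteq> {}"
  proof -
    have "0 < card (mismatches \<zeta> xs m b)" using that by (simp add: card_gt_0_iff)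
    then show ?thesis using split by linarith
  qed
  show "card (mismatches \<zeta> xs m b) \<le> k" if "mismatches \<zeta> xs a m \<noteq> {}"
  proof -
    have "0 < card (mismatches \<zeta> xs a m)" using that by (simp add: card_gt_0_iff)
    then show ?thesis using split by linarith
  qed
qed

lemma no_crossing_while_right_half_dirty:
  assumes IH: "crossing_forces_mismatches L k" and walk: "swap_walk L \<rho> E" and dist: "distinct (\<rho> 0)"
    and widths: "a + 2 ^ k \<le> m" "m + 2 ^ k \<le> b" "b \<le> Suc L"
    and times: "R < T" "T \<le> E"
    and right_intact: "mismatches (\<rho> 0) (\<rho> R) m b = {}"
    and right_dirty: "\<And>t. R < t \<Longrightarrow> t < T \<Longrightarrow> mismatches (\<rho> 0) (\<rho> t) m b \<noteq> {}"
    and budget: "\<And>t. R < t \<Longrightarrow> t < T \<Longrightarrow> card (mismatches (\<rho> 0) (\<rho> t) a b) \<le> Suc k"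
    and v_R: "v \<in> set (take m (\<rho> R))" and v_outside: "v \<notin> (!) (\<rho> 0) ` {a..<m}"
  shows "v \<notin> set (drop b (\<rho> T))"
proof -
  have "a \<le> m" "m \<le> b" using widths by simp_all
  note halves_le = card_mismatches_halves_le[OF this budget]
  have left_budget: "card (mismatches (\<rho> 0) (\<rho> t) a m) \<le> k" if "R < t" "t < T" for t
    using halves_le(1)[OF that right_dirty[OF that]] .
  show ?thesis
  proof (cases "\<exists>r. R < r \<and> r < T \<and> mismatches (\<rho> 0) (\<rho> r) a m = {}")
    case False
    show ?thesis
    proof (rule no_rightward_crossing_within_budget[OF IH walk dist _ times(2) widths(2,3) right_intact _ v_R])
      show "R \<le> T" using times by simp
      show "card (mismatches (\<rho> 0) (\<rho> t) m b) \<le> k" if "R < t" "t < T" for t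
        using halves_le(2)[OF that] False that by blast
    qed
  next
    case True
    then obtain r0 where "R < r0 \<and> r0 < T \<and> mismatches (\<rho> 0) (\<rho> r0) a m = {}" by blast
    then obtain r where r: "R < r" "r < T" and left_intact: "mismatches (\<rho> 0) (\<rho> r) a m = {}"
      and r_least: "\<And>t. t < r \<Longrightarrow> \<not> (R < t \<and> t < T \<and> mismatches (\<rho> 0) (\<rho> t) a m = {})"
      using ex_least_nat_le[of "\<lambda>t. R < t \<and> t < T \<and> mismatches (\<rho> 0) (\<rho> t) a m = {}" r0] by blast
    have "set (take m (\<rho> r)) = set (take m (\<rho> R))"
    proof (rule set_take_eq_between_intact_halves[OF IH walk dist widths _ _ right_intact left_intact])
      show "R \<le> r" "r \<le> E" using r times by simp_all
      show "card (mismatches (\<rho> 0) (\<rho> t) a m) \<le> k \<and> card (mismatches (\<rho> 0) (\<rho> t) m b) \<le> k"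
        if "R < t" "t < r" for t
        using left_budget[of t] halves_le(2)[of t] r_least[of t] that r by simp
    qed
    with v_R have v_r: "v \<in> set (take m (\<rho> r))" by simp
    have dist_r: "distinct (\<rho> r)" using swap_walk_state(3)[OF walk] dist r times by simp
    have v_left: "v \<in> set (take a (\<rho> r))"
      using outside_intact_window[OF left_intact in_set_takeD[OF v_r] v_outside]
        in_set_drop_iff_notin_take[OF dist_r in_set_takeD[OF v_r]] v_r by blast
    have "v \<notin> set (drop m (\<rho> T))"
    proof (rule no_rightward_crossing_within_budget[OF IH walk dist _ times(2) widths(1) _ left_intact _ v_left])
      show "r \<le> T" "m \<le> Suc L" using r widths by simp_all
      show "card (mismatches (\<rho> 0) (\<rho> t) a m) \<le> k" if "r < t" "t < T" for t
        using left_budget that r by simp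
    qed
    then show ?thesis using set_drop_subset_set_drop[of m b "\<rho> T"] widths by auto
  qed
qed

lemma crossing_forces_mismatches_Suc:
  assumes IH: "crossing_forces_mismatches L k"
  shows "crossing_forces_mismatches L (Suc k)"
  unfolding crossing_forces_mismatches_def
proof (intro allI impI)
  fix \<rho> E a b v
  assume walk: "swap_walk L \<rho> E" and dist: "distinct (\<rho> 0)" and width: "a + 2 ^ Suc k \<le> b"
    and b: "b \<le> Suc L" and start: "v \<in> set (take a (\<rho> 0))" and final: "v \<in> set (drop b (\<rho> E))"
  define m where "m = a + 2 ^ k"
  have widths: "a + 2 ^ k \<le> m" "m + 2 ^ k \<le> b"
    using width by (simp_all add: m_def)
  have "v \<notin> (!) (\<rho> 0) ` {a..<b}"
    using nth_notin_window_if_in_take[OF dist _ start, of b] swap_walk_state(1)[OF walk] b by simp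
  then have v_outside: "v \<notin> (!) (\<rho> 0) ` {a..<m}" "v \<notin> (!) (\<rho> 0) ` {m..<b}"
    using widths by auto
  show "\<exists>t<E. Suc k < card (mismatches (\<rho> 0) (\<rho> t) a b)"
  proof (rule ccontr)
    assume no_excess: "\<not> ?thesis"
    have budget: "card (mismatches (\<rho> 0) (\<rho> t) a b) \<le> Suc k" if "t < E" for t
      using no_excess that not_le by blast
    obtain T where T: "T \<le> E" "v \<in> set (drop b (\<rho> T))" "\<And>t. t < T \<Longrightarrow> v \<notin> set (drop b (\<rho> t))"
      using ex_least_nat_le[of "\<lambda>t. v \<in> set (drop b (\<rho> t))", OF final] by blast
    have "0 < T"
      using T(2) start set_take_disj_set_drop_if_distinct[OF dist, of a b] widths by (cases T) auto
    define R where "R = (GREATEST t. t < T \<and> mismatches (\<rho> 0) (\<rho> t) m b = {})"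
    have R: "R < T" "mismatches (\<rho> 0) (\<rho> R) m b = {}"
      using GreatestI_nat[of "\<lambda>t. t < T \<and> mismatches (\<rho> 0) (\<rho> t) m b = {}" 0 T] \<open>0 < T\<close>
      by (simp_all add: R_def)
    have right_dirty: "mismatches (\<rho> 0) (\<rho> t) m b \<noteq> {}" if "R < t" "t < T" for t
      using Greatest_le_nat[of "\<lambda>t. t < T \<and> mismatches (\<rho> 0) (\<rho> t) m b = {}" t T] that
      by (auto simp: R_def)
    have "v \<in> set (\<rho> R)"
      using swap_walk_state(2)[OF walk, of R] R(1) T(1) in_set_takeD[OF start] by simp
    then have "v \<in> set (take m (\<rho> R))"
      using outside_intact_window[OF R(2) _ v_outside(2)] T(3)[OF R(1)] by blast
    then have "v \<notin> set (drop b (\<rho> T))"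
      using no_crossing_while_right_half_dirty[OF IH walk dist widths b R(1) T(1) R(2) right_dirty
          budget _ v_outside(1)] T(1) by simp
    then show False using T(2) by simp
  qed
qed

lemma crossing_forces_mismatches: "crossing_forces_mismatches L k"
  by (induction k) (simp_all add: crossing_forces_mismatches_0 crossing_forces_mismatches_Suc)

section \<open>The witness state\<close>

lemma Xlam_eq_rtranclp: "Xlam L = {\<xi>. (step L)\<^sup>*\<^sup>* (lam L) \<xi>}"
  unfolding Xlam_def by (auto simp: rtranclp_power relpowp_fun_conv)

lemma length_lam [simp]: "length (lam L) = Suc L"
  by (simp add: lam_def)

lemma lam_eq: "lam L = [1..<L + 2]"
  by (simp add: lam_def map_Suc_upt)

lemma swap_walk_from_lam:
  "\<tau> 0 = lam L \<Longrightarrow> \<forall>s<N. step L (\<tau> s) (\<tau> (Suc s)) \<Longrightarrow> swap_walk L \<tau> N"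
  by (simp add: swap_walk_def)

lemma Xlam_states:
  assumes "\<xi> \<in> Xlam L"
  shows "length \<xi> = Suc L" "set \<xi> = {1..Suc L}"
proof -
  obtain N \<tau> where \<tau>: "\<tau> 0 = lam L" "\<tau> N = \<xi>" "\<forall>s<N. step L (\<tau> s) (\<tau> (Suc s))"
    using assms by (auto simp: Xlam_def)
  have walk: "swap_walk L \<tau> N" using swap_walk_from_lam[OF \<tau>(1,3)] .
  show "length \<xi> = Suc L" using swap_walk_state(1)[OF walk, of N] \<tau>(2) by simp
  show "set \<xi> = {1..Suc L}" using swap_walk_state(2)[OF walk, of N] \<tau> by (auto simp: lam_eq)
qed

lemma finite_Xlam: "finite (Xlam L)"
proof (rule finite_subset)
  show "Xlam L \<subseteq> {xs. set xs \<subseteq> {1..Suc L} \<and> length xs = Suc L}" using Xlam_states by auto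
qed (simp add: finite_lists_length_eq)

lemma step_swap_adjacent:
  assumes "length (us @ x # y # zs) = Suc L"
  shows "step L (us @ x # y # zs) (us @ y # x # zs)"
proof -
  have "Suc (length us) \<in> {1..L}" using assms by simp
  moreover have "swp (Suc (length us)) (us @ x # y # zs) = us @ y # x # zs"
    by (simp add: swp_def nth_append list_update_append)
  ultimately show ?thesis unfolding step_def by metis
qed

lemma steps_move_right:
  "length (us @ x # ws @ zs) = Suc L \<Longrightarrow> (step L)\<^sup>*\<^sup>* (us @ x # ws @ zs) (us @ ws @ x # zs)"
proof (induction ws arbitrary: us)
  case (Cons w ws)
  have "step L (us @ x # w # ws @ zs) (us @ w # x # ws @ zs)"
    using step_swap_adjacent[of us x w "ws @ zs" L] Cons.prems by simp
  moreover have "(step L)\<^sup>*\<^sup>* ((us @ [w]) @ x # ws @ zs) ((us @ [w]) @ ws @ x # zs)"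
    using Cons.IH[of "us @ [w]"] Cons.prems by simp
  ultimately show ?case by (simp add: converse_rtranclp_into_rtranclp)
qed simp

lemma steps_move_left:
  "length (us @ ws @ x # zs) = Suc L \<Longrightarrow> (step L)\<^sup>*\<^sup>* (us @ ws @ x # zs) (us @ x # ws @ zs)"
proof (induction ws arbitrary: us)
  case (Cons w ws)
  have "(step L)\<^sup>*\<^sup>* ((us @ [w]) @ ws @ x # zs) ((us @ [w]) @ x # ws @ zs)"
    using Cons.IH[of "us @ [w]"] Cons.prems by simp
  moreover have "step L (us @ w # x # ws @ zs) (us @ x # w # ws @ zs)"
    using step_swap_adjacent[of us w x "ws @ zs" L] Cons.prems by simp
  ultimately show ?case by (simp add: rtranclp.rtrancl_into_rtrancl)
qed simp

definition lam_ends_swapped :: "nat \<Rightarrow> nat list" where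
  "lam_ends_swapped L = Suc L # [2..<Suc L] @ [1]"

lemma lam_split: "1 \<le> L \<Longrightarrow> lam L = 1 # [2..<Suc L] @ [Suc L]"
  by (simp add: lam_eq upt_conv_Cons numeral_2_eq_2)

lemma lam_ends_swapped_in_Xlam:
  assumes "1 \<le> L"
  shows "lam_ends_swapped L \<in> Xlam L"
proof -
  let ?mid = "[2..<Suc L]"
  have "(step L)\<^sup>*\<^sup>* ([] @ 1 # ?mid @ [Suc L]) ([] @ ?mid @ 1 # [Suc L])"
    by (rule steps_move_right) (use assms in \<open>simp; arith\<close>)
  moreover have "step L (?mid @ 1 # Suc L # []) (?mid @ Suc L # 1 # [])"
    by (rule step_swap_adjacent) (use assms in \<open>simp; arith\<close>)
  moreover have "(step L)\<^sup>*\<^sup>* ([] @ ?mid @ Suc L # [1]) ([] @ Suc L # ?mid @ [1])"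
    by (rule steps_move_left) (use assms in \<open>simp; arith\<close>)
  ultimately have "(step L)\<^sup>*\<^sup>* (lam L) (lam_ends_swapped L)"
    using lam_split[OF assms] by (simp add: lam_ends_swapped_def)
  then show ?thesis by (simp add: Xlam_eq_rtranclp)
qed

lemma nth_lam: "i \<le> L \<Longrightarrow> lam L ! i = Suc i"
  by (simp add: lam_def less_Suc_eq_le del: upt_Suc)

lemma nth_lam_ends_swapped: "0 < i \<Longrightarrow> i < L \<Longrightarrow> lam_ends_swapped L ! i = Suc i"
  by (simp add: lam_ends_swapped_def nth_Cons' nth_append del: upt_Suc)

lemma card_mismatches_le_ndiff: "card (mismatches (lam L) xs 1 L) \<le> ndiff L xs (lam L)"
  unfolding ndiff_def by (rule card_mono) (auto simp: mismatches_def)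

lemma one_plus_two_pow_floor_log_le:
  assumes "2 \<le> L"
  shows "1 + 2 ^ nat (\<lfloor>log 2 (real L)\<rfloor> - 1) \<le> L"
proof -
  obtain i where i: "2 ^ i \<le> L div 2" "L div 2 < 2 ^ (i + 1)"
    using ex_power_ivl1[of 2 "L div 2"] assms by (auto simp: Suc_le_eq div_greater_zero_iff)
  have "\<lfloor>log 2 (real L)\<rfloor> - 1 = int i"
    using floor_log2_div2[OF assms] floor_log_nat_eq_if[OF i] by simp
  moreover have "1 + L div 2 \<le> L" using assms by presburger
  ultimately show ?thesis using i(1) by simp
qed

lemma lam_ends_swapped_notin_Sset:
  assumes "2 \<le> L"
  shows "lam_ends_swapped L \<notin> Sset L"
proof
  assume "lam_ends_swapped L \<in> Sset L"
  then obtain N \<tau> where \<tau>: "\<tau> 0 = lam L" "\<tau> N = lam_ends_swapped L" "\<forall>s<N. step L (\<tau> s) (\<tau> (Suc s))"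
    and few: "\<forall>s\<le>N. int (ndiff L (\<tau> s) (lam L)) \<le> \<lfloor>log 2 (real L)\<rfloor> - 1"
    unfolding Sset_def by blast
  define k where "k = nat (\<lfloor>log 2 (real L)\<rfloor> - 1)"
  have start: "1 \<in> set (take 1 (\<tau> 0))"
    using \<tau>(1) nth_lam[of 0 L] by (simp add: take_Suc_conv_app_nth)
  have final: "1 \<in> set (drop L (\<tau> N))"
    using \<tau>(2) assms by (cases L) (simp_all add: lam_ends_swapped_def del: upt_Suc)
  have width: "1 + 2 ^ k \<le> L" using one_plus_two_pow_floor_log_le[OF assms] by (simp add: k_def)
  have dist: "distinct (\<tau> 0)" using \<tau>(1) by (simp add: lam_def distinct_map del: upt_Suc)
  obtain t where "t < N" "k < card (mismatches (\<tau> 0) (\<tau> t) 1 L)"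
    by (rule crossing_forces_mismatchesE[OF crossing_forces_mismatches swap_walk_from_lam[OF \<tau>(1,3)]
          dist width _ start final]) simp
  moreover have "ndiff L (\<tau> t) (lam L) \<le> k"
  proof -
    have "int (ndiff L (\<tau> t) (lam L)) \<le> \<lfloor>log 2 (real L)\<rfloor> - 1" using few \<open>t < N\<close> by simp
    then show ?thesis unfolding k_def by (metis nat_int nat_mono)
  qed
  ultimately show False using card_mismatches_le_ndiff[of L "\<tau> t"] \<tau>(1) by simp
qed

section \<open>Weights\<close>

lemma wt_exponent_eq:
  "2 * (int i + 1) * int k - (int k)\<^sup>2 + 1 = (int i + 1)\<^sup>2 + 1 - (int k - (int i + 1))\<^sup>2"
  by (simp add: power2_eq_square algebra_simps)

lemma wt_exponent_le:
  assumes "k \<noteq> Suc i"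
  shows "2 * (int i + 1) * int k - (int k)\<^sup>2 + 1 \<le> (int i + 1)\<^sup>2"
proof -
  have "0 < (int k - (int i + 1))\<^sup>2" using assms by simp
  then show ?thesis unfolding wt_exponent_eq by linarith
qed

lemma wt_const_exponent_le: "(2 * int r + 1) * (int i + 1) - (int r)\<^sup>2 - int r \<le> (int i + 1)\<^sup>2"
proof -
  have "0 \<le> (int i + 1 - int r) * (int i - int r)"
    by (cases "int r \<le> int i") (auto intro: mult_nonneg_nonneg mult_nonpos_nonpos)
  then show ?thesis by (simp add: power2_eq_square algebra_simps)
qed

definition wt_const :: "nat \<Rightarrow> nat \<Rightarrow> real" where
  "wt_const L i = (\<Sum>r\<in>{0..L}. gam L powi ((2 * int r + 1) * (int i + 1) - (int r)\<^sup>2 - int r))"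

lemma wt_eq: "wt L i k = gam L powi (2 * (int i + 1) * int k - (int k)\<^sup>2 + 1) + wt_const L i"
  by (simp add: wt_def wt_const_def)

lemma one_le_gam: "1 \<le> gam L"
  by (simp add: gam_def)

lemma wt_const_bounds:
  assumes "i \<le> L"
  shows "gam L powi ((int i + 1)\<^sup>2) \<le> wt_const L i"
    and "wt_const L i \<le> (real L + 1) * gam L powi ((int i + 1)\<^sup>2)"
proof -
  have "gam L powi ((int i + 1)\<^sup>2) = gam L powi ((2 * int i + 1) * (int i + 1) - (int i)\<^sup>2 - int i)"
    by (simp add: power2_eq_square algebra_simps)
  also have "\<dots> \<le> wt_const L i"
    unfolding wt_const_def using assms one_le_gam[of L] by (intro member_le_sum) auto
  finally show "gam L powi ((int i + 1)\<^sup>2) \<le> wt_const L i" .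
  have "wt_const L i \<le> (\<Sum>r\<in>{0..L}. gam L powi ((int i + 1)\<^sup>2))"
    unfolding wt_const_def
    by (intro sum_mono power_int_increasing wt_const_exponent_le one_le_gam)
  then show "wt_const L i \<le> (real L + 1) * gam L powi ((int i + 1)\<^sup>2)" by (simp add: add.commute)
qed

lemma wt_const_nonneg: "i \<le> L \<Longrightarrow> 0 \<le> wt_const L i"
  using wt_const_bounds(1)[of i L] one_le_gam[of L] by (meson order_trans zero_le_power_int zero_le_one)

lemma wt_lower: "i \<le> L \<Longrightarrow> gam L powi ((int i + 1)\<^sup>2) \<le> wt L i k"
  using wt_const_bounds(1)[of i L] one_le_gam[of L] by (simp add: wt_eq add_increasing)

lemma wt_upper:
  "k \<noteq> Suc i \<Longrightarrow> i \<le> L \<Longrightarrow> wt L i k \<le> (real L + 2) * gam L powi ((int i + 1)\<^sup>2)"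
  using power_int_increasing[OF wt_exponent_le one_le_gam, of k i L] wt_const_bounds(2)[of i L]
  by (simp add: wt_eq algebra_simps)

lemma wt_diag_bounds:
  assumes "i \<le> L"
  shows "gam L * gam L powi ((int i + 1)\<^sup>2) \<le> wt L i (Suc i)"
    and "wt L i (Suc i) \<le> (gam L + real L + 1) * gam L powi ((int i + 1)\<^sup>2)"
proof -
  have "gam L powi (2 * (int i + 1) * int (Suc i) - (int (Suc i))\<^sup>2 + 1)
      = gam L * gam L powi ((int i + 1)\<^sup>2)"
    using one_le_gam[of L] by (simp add: power2_eq_square algebra_simps power_int_add)
  then show "gam L * gam L powi ((int i + 1)\<^sup>2) \<le> wt L i (Suc i)"
    and "wt L i (Suc i) \<le> (gam L + real L + 1) * gam L powi ((int i + 1)\<^sup>2)"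
    using wt_const_bounds[OF assms] wt_const_nonneg[OF assms] by (simp_all add: wt_eq algebra_simps)
qed

lemma wt_pos: "i \<le> L \<Longrightarrow> 0 < wt L i k"
  using wt_lower[of i L k] one_le_gam[of L] by (meson less_le_trans zero_less_power_int zero_less_one)

lemma sum_wt_split:
  "i \<le> L \<Longrightarrow> (\<Sum>h\<in>{1..L+1}. wt L i h) = wt L i (Suc i) + (\<Sum>h\<in>{1..L+1} - {Suc i}. wt L i h)"
  by (subst sum.remove[of _ "Suc i"]) auto

lemma sum_wt_off_diag_le:
  assumes "i \<le> L"
  shows "(\<Sum>h\<in>{1..L+1} - {Suc i}. wt L i h) \<le> real L * ((real L + 2) * gam L powi ((int i + 1)\<^sup>2))"
proof -
  have "(\<Sum>h\<in>{1..L+1} - {Suc i}. wt L i h)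
      \<le> (\<Sum>h\<in>{1..L+1} - {Suc i}. (real L + 2) * gam L powi ((int i + 1)\<^sup>2))"
    using assms by (intro sum_mono wt_upper) auto
  also have "\<dots> = real L * ((real L + 2) * gam L powi ((int i + 1)\<^sup>2))"
    using assms by simp
  finally show ?thesis .
qed

lemma piA_lower:
  assumes "i \<le> L"
  shows "1 / (2 * gam L) \<le> piA L i k"
proof -
  define A where "A = gam L powi ((int i + 1)\<^sup>2)"
  have A: "0 < A" using one_le_gam[of L] by (simp add: A_def)
  have "(\<Sum>h\<in>{1..L+1}. wt L i h) \<le> (gam L + real L + 1) * A + real L * ((real L + 2) * A)"
    using sum_wt_split[OF assms] wt_diag_bounds(2)[OF assms] sum_wt_off_diag_le[OF assms]
    by (simp add: A_def)
  also have "\<dots> = (gam L + (real L * real L + 3 * real L + 1)) * A" by (simp add: algebra_simps)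
  also have "\<dots> \<le> 2 * gam L * A"
  proof -
    have "real L * real L + 3 * real L + 1 \<le> gam L"
      by (simp add: gam_def power3_eq_cube algebra_simps)
    then show ?thesis using A by (intro mult_right_mono) auto
  qed
  finally have "(\<Sum>h\<in>{1..L+1}. wt L i h) \<le> 2 * gam L * A" .
  moreover have "A \<le> wt L i k" using wt_lower[OF assms] by (simp add: A_def)
  moreover have "0 < (\<Sum>h\<in>{1..L+1}. wt L i h)"
    using wt_pos[OF assms] by (intro sum_pos) auto
  ultimately have "A / (2 * gam L * A) \<le> wt L i k / (\<Sum>h\<in>{1..L+1}. wt L i h)"
    using A by (intro frac_le) auto
  then show ?thesis using A by (simp add: piA_def)
qed

lemma piA_diag_lower:
  assumes "i \<le> L"
  shows "real L / (real L + 1) \<le> piA L i (Suc i)"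
proof -
  define A where "A = gam L powi ((int i + 1)\<^sup>2)"
  define W where "W = wt L i (Suc i)"
  define R where "R = (\<Sum>h\<in>{1..L+1} - {Suc i}. wt L i h)"
  have A: "0 < A" using one_le_gam[of L] by (simp add: A_def)
  have "real L * R \<le> real L * (real L * ((real L + 2) * A))"
    using sum_wt_off_diag_le[OF assms] by (intro mult_left_mono) (auto simp: R_def A_def)
  also have "\<dots> = real L * (real L * (real L + 2)) * A" by (simp add: algebra_simps)
  also have "\<dots> \<le> gam L * A"
  proof -
    have "real L * (real L * (real L + 2)) \<le> gam L"
      by (simp add: gam_def power3_eq_cube algebra_simps)
    then show ?thesis using A by (intro mult_right_mono) auto
  qed
  also have "\<dots> \<le> W" using wt_diag_bounds(1)[OF assms] by (simp add: W_def A_def)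
  finally have "real L * R \<le> W" .
  moreover have "0 < W" using wt_pos[OF assms] by (simp add: W_def)
  moreover have "0 \<le> R" unfolding R_def using wt_pos[OF assms] by (intro sum_nonneg) (simp add: less_imp_le)
  ultimately have "real L / (real L + 1) \<le> W / (W + R)"
    by (simp add: divide_simps algebra_simps)
  then show ?thesis using sum_wt_split[OF assms] by (simp add: piA_def W_def R_def)
qed

lemma piA_pos: "i \<le> L \<Longrightarrow> 0 < piA L i k"
  unfolding piA_def using wt_pos by (intro divide_pos_pos sum_pos) auto

lemma sum_piA:
  assumes "i \<le> L"
  shows "(\<Sum>h\<in>{1..L+1}. piA L i h) = 1"
proof -
  have "0 < (\<Sum>h\<in>{1..L+1}. wt L i h)" using wt_pos[OF assms] by (intro sum_pos) auto
  then show ?thesis by (simp add: piA_def sum_divide_distrib[symmetric])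
qed

lemma sum_lists_length_prod:
  fixes f :: "nat \<Rightarrow> 'a \<Rightarrow> 'b::comm_semiring_1"
  assumes "finite A"
  shows "(\<Sum>xs | set xs \<subseteq> A \<and> length xs = n. \<Prod>i<n. f i (xs ! i)) = (\<Prod>i<n. \<Sum>a\<in>A. f i a)"
proof (induction n arbitrary: f)
  case 0
  then show ?case by (simp cong: conj_cong)
next
  case (Suc n)
  let ?X = "{xs. set xs \<subseteq> A \<and> length xs = n}"
  have "(\<Sum>xs | set xs \<subseteq> A \<and> length xs = Suc n. \<Prod>i<Suc n. f i (xs ! i))
      = (\<Sum>(xs, a) \<in> ?X \<times> A. f 0 a * (\<Prod>i<n. f (Suc i) (xs ! i)))"
    by (subst lists_length_Suc_eq, subst sum.reindex[OF inj_split_Cons])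
      (simp add: prod.lessThan_Suc_shift split_def del: prod.lessThan_Suc)
  also have "\<dots> = (\<Sum>xs\<in>?X. \<Sum>a\<in>A. f 0 a * (\<Prod>i<n. f (Suc i) (xs ! i)))"
    by (simp add: sum.cartesian_product')
  also have "\<dots> = (\<Sum>a\<in>A. \<Sum>xs\<in>?X. f 0 a * (\<Prod>i<n. f (Suc i) (xs ! i)))"
    by (rule sum.swap)
  also have "\<dots> = (\<Sum>a\<in>A. f 0 a) * (\<Sum>xs\<in>?X. \<Prod>i<n. f (Suc i) (xs ! i))"
    by (simp only: sum_product)
  also have "\<dots> = (\<Prod>i<Suc n. \<Sum>a\<in>A. f i a)"
    using Suc.IH[of "\<lambda>i. f (Suc i)"] by (simp add: prod.lessThan_Suc_shift del: prod.lessThan_Suc)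
  finally show ?case .
qed

lemma pibar_pos: "0 < pibar L \<xi>"
  unfolding pibar_def using piA_pos by (intro prod_pos) simp

lemma sum_pibar_Xlam_le_1: "(\<Sum>\<xi>\<in>Xlam L. pibar L \<xi>) \<le> 1"
proof -
  have "(\<Sum>\<xi>\<in>Xlam L. pibar L \<xi>) \<le> (\<Sum>\<xi> | set \<xi> \<subseteq> {1..L+1} \<and> length \<xi> = Suc L. pibar L \<xi>)"
    by (rule sum_mono2) (auto simp: finite_lists_length_eq pibar_pos less_imp_le dest: Xlam_states)
  also have "\<dots> = (\<Prod>i<Suc L. \<Sum>h\<in>{1..L+1}. piA L i h)"
    unfolding pibar_def atLeast0AtMost lessThan_Suc_atMost[symmetric]
    by (rule sum_lists_length_prod) simp
  also have "\<dots> = 1" by (rule prod.neutral) (metis lessThan_iff less_Suc_eq_le sum_piA)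
  finally show ?thesis .
qed

lemma sum_pibar_le_pibar_lam: "(\<Sum>\<xi>\<in>A. pibar L \<xi>) \<le> pibar_lam L A"
proof -
  have "lam L \<in> Xlam L" by (simp add: Xlam_eq_rtranclp)
  then have "0 < (\<Sum>\<xi>\<in>Xlam L. pibar L \<xi>)"
    using finite_Xlam pibar_pos by (intro sum_pos) auto
  then show ?thesis
    unfolding pibar_lam_def using sum_pibar_Xlam_le_1[of L] pibar_pos
    by (simp add: le_divide_eq mult_left_le sum_nonneg less_imp_le)
qed

lemma exp_minus_one_less_pow:
  assumes "2 \<le> L"
  shows "exp (-1) < (real L / (real L + 1)) ^ (L - 1)"
proof -
  have "ln (1 + 1 / real L) \<le> 1 / real L" by (rule ln_add_one_self_le_self) simp
  moreover have "ln (real L / (real L + 1)) = - ln (1 + 1 / real L)"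
    using assms by (simp add: ln_div field_simps)
  ultimately have "- (1 / real L) \<le> ln (real L / (real L + 1))" by simp
  then have "real (L - 1) * (- (1 / real L)) \<le> real (L - 1) * ln (real L / (real L + 1))"
    by (intro mult_left_mono) auto
  moreover have "-1 < real (L - 1) * (- (1 / real L))"
    using assms by (simp add: of_nat_diff field_simps)
  ultimately have "exp (-1) < exp (real (L - 1) * ln (real L / (real L + 1)))" by simp
  also have "\<dots> = (real L / (real L + 1)) ^ (L - 1)"
    by (simp only: exp_of_nat_mult) (use assms in simp)
  finally show ?thesis .
qed

lemma pibar_lam_ends_swapped_gt:
  assumes "2 \<le> L"
  shows "1 / (4 * exp 1 * (real L + 1) ^ 6) < pibar L (lam_ends_swapped L)"
proof -
  define lb where "lb i = (if i = 0 \<or> i = L then 1 / (2 * gam L) else real L / (real L + 1))" for i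
  have "(\<Prod>i\<in>{0..L}. lb i) \<le> pibar L (lam_ends_swapped L)"
    unfolding pibar_def
  proof (rule prod_mono)
    fix i assume "i \<in> {0..L}"
    then show "0 \<le> lb i \<and> lb i \<le> piA L i (lam_ends_swapped L ! i)"
      using piA_lower[of i L] piA_diag_lower[of i L] nth_lam_ends_swapped[of i L] one_le_gam[of L]
      by (auto simp: lb_def)
  qed
  moreover have "(\<Prod>i\<in>{0..L}. lb i) = (1 / (2 * gam L))\<^sup>2 * (real L / (real L + 1)) ^ (L - 1)"
  proof -
    have "{0..L} = insert 0 (insert L {1..L - 1})" using assms by auto
    moreover have "(\<Prod>i\<in>{1..L - 1}. lb i) = (\<Prod>i\<in>{1..L - 1}. real L / (real L + 1))"
      by (rule prod.cong) (auto simp: lb_def)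
    ultimately show ?thesis using assms by (simp add: lb_def power2_eq_square)
  qed
  moreover have "(1 / (2 * gam L))\<^sup>2 * exp (-1) = 1 / (4 * exp 1 * (real L + 1) ^ 6)"
    by (simp add: gam_def exp_minus field_simps power_mult[symmetric])
  moreover have "0 < (1 / (2 * gam L))\<^sup>2" using one_le_gam[of L] by simp
  ultimately show ?thesis
    using exp_minus_one_less_pow[OF assms] by (metis mult_strict_left_mono order_less_le_trans)
qed

theorem lemma14:
  fixes L :: nat
  assumes "L \<ge> 2"
  shows "pibar_lam L (Xlam L - Sset L) > 1 / (4 * exp 1 * (real L + 1) ^ 6)"
proof -
  have "lam_ends_swapped L \<in> Xlam L - Sset L"
    using lam_ends_swapped_in_Xlam lam_ends_swapped_notin_Sset assms by simp
  then have "pibar L (lam_ends_swapped L) \<le> (\<Sum>\<xi>\<in>Xlam L - Sset L. pibar L \<xi>)"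
    using finite_Xlam pibar_pos by (intro member_le_sum) (auto simp: less_imp_le)
  also have "\<dots> \<le> pibar_lam L (Xlam L - Sset L)"
    by (rule sum_pibar_le_pibar_lam)
  finally show ?thesis
    using pibar_lam_ends_swapped_gt[OF assms] by simp
qed

end
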